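(* Let $\epsilon_1>0$, let $u$ be a utility function on contexts of sensitivity $\Delta u\le1$ (context population size or overlap with a fixed starting context, $-\infty$ on non-matching contexts), and let $C_V$ be a starting context with $f_M(D_{C_V},V)=\mathrm{true}$. Consider the Random Walk Sampling algorithm: initialize the multiset $C_M=[C_V]$ and current context $C=C_V$; repeatedly pick uniformly at random a context $C_i$ connected to $C$ (among those not yet rejected); if $f_M(D_{C_i},V)=\mathrm{true}$, append $C_i$ to $C_M$ and set $C\leftarrow C_i$, otherwise discard $C_i$; stop when $|C_M|>n$ or no candidate connected context remains; finally output $\mathrm{Exp}^{\epsilon_1}_u(D,C_M)$. Then this algorithm satisfies $(2\epsilon_1,\ COE_M(\cdot,V))$-Output Constrained Differential Privacy.
   Context: Dataset $D$ over categorical attributes $A_1,\dots,A_m$ (domain sizes $|A_i|$, all possible values) and metric attribute $M$; $t=\sum_i|A_i|$. A context is a binary vector of length $t$, $c_{ij}=1$ meaning the $j$-th value of $A_i$ is selected; $D_C$ is the set of tuples of $D$ whose value in every $A_i$ is selected by $C$. Two contexts are connected if their Hamming distance is $1$. $f_M(D_C,V)$ is a deterministic test of whether record $V$ is an outlier in $D_C$ w.r.t. $M$; $COE_M(D,V)$ is the set of contexts $C$ with $V\in D_C$ and $f_M(D_C,V)=\mathrm{true}$. Sensitivity $\Delta u=\max|u(D_1,r)-u(D_2,r)|$ over neighboring datasets (differing by adding/removing one record) and outputs $r$. $\mathrm{Exp}^{\epsilon}_u(D,\mathcal R)$ outputs $r\in\mathcal R$ with probability $\exp(\epsilon u(D,r)/(2\Delta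 u))/\sum_{r'\in\mathcal R}\exp(\epsilon u(D,r')/(2\Delta u))$. $D_1,D_2$ are $f$-neighbors if they differ by adding/removing one record and $f(D_1)=f(D_2)\ne\emptyset$; $\mathcal M$ satisfies $(\epsilon,f)$-Output Constrained Differential Privacy if $\Pr[\mathcal M(D_1)\in S]\le e^\epsilon\Pr[\mathcal M(D_2)\in S]$ for all $f$-neighbors and all output sets $S$. *)

theory Defs
  imports "HOL-Probability.Probability"
begin

text \<open>A context is a binary vector of length t = sum of the domain sizes; we represent it
  as the set of selected positions (i,j), meaning value j of attribute A_i is selected
  (i < m, j < sz i).\<close>
type_synonym ctx = "(nat \<times> nat) set"

definition ctx_space :: "nat \<Rightarrow> (nat \<Rightarrow> nat) \<Rightarrow> ctx set" where
  "ctx_space m sz = Pow {(i, j). i < m \<and> j < sz i}"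

definition connected :: "ctx \<Rightarrow> ctx \<Rightarrow> bool" where
  "connected C C' \<longleftrightarrow> card ((C - C') \<union> (C' - C)) = 1"

text \<open>Records: val r i is the (index of the) value of attribute A_i in record r;
  the metric attribute is only accessed through the outlier test f.\<close>
definition restrict_ds :: "nat \<Rightarrow> ('r \<Rightarrow> nat \<Rightarrow> nat) \<Rightarrow> 'r multiset \<Rightarrow> ctx \<Rightarrow> 'r multiset" where
  "restrict_ds m val D C = filter_mset (\<lambda>r. \<forall>i<m. (i, val r i) \<in> C) D"

definition matches :: "nat \<Rightarrow> ('r \<Rightarrow> nat \<Rightarrow> nat) \<Rightarrow> 'r \<Rightarrow> ctx \<Rightarrow> bool" where
  "matches m val V C \<longleftrightarrow> (\<forall>i<m. (i, val V i) \<in> C)"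

definition COE :: "nat \<Rightarrow> (nat \<Rightarrow> nat) \<Rightarrow> ('r \<Rightarrow> nat \<Rightarrow> nat) \<Rightarrow> ('r multiset \<Rightarrow> 'r \<Rightarrow> bool)
    \<Rightarrow> 'r multiset \<Rightarrow> 'r \<Rightarrow> ctx set" where
  "COE m sz val f D V = {C \<in> ctx_space m sz.
      V \<in># restrict_ds m val D C \<and> f (restrict_ds m val D C) V}"

definition neighbors :: "'r multiset \<Rightarrow> 'r multiset \<Rightarrow> bool" where
  "neighbors D1 D2 \<longleftrightarrow> (\<exists>x. D2 = add_mset x D1) \<or> (\<exists>x. D1 = add_mset x D2)"

definition sensitivity :: "ctx set \<Rightarrow> ('r multiset \<Rightarrow> ctx \<Rightarrow> real) \<Rightarrow> ereal" where
  "sensitivity R u = (SUP (D1, D2, C) \<in> {(D1, D2, C). neighbors D1 D2 \<and> C \<in> R}.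
       ereal \<bar>u D1 C - u D2 C\<bar>)"

definition exp_weight :: "real \<Rightarrow> real \<Rightarrow> ereal \<Rightarrow> real" where
  "exp_weight \<epsilon> du x = (case x of ereal y \<Rightarrow> exp (\<epsilon> * y / (2 * du)) | _ \<Rightarrow> 0)"

definition exp_mech :: "real \<Rightarrow> real \<Rightarrow> ('c \<Rightarrow> ereal) \<Rightarrow> 'c multiset \<Rightarrow> 'c pmf" where
  "exp_mech \<epsilon> du s M = embed_pmf (\<lambda>r. of_nat (count M r) * exp_weight \<epsilon> du (s r)
       / sum_mset (image_mset (\<lambda>r'. exp_weight \<epsilon> du (s r')) M))"

text \<open>One step of the random walk; state = (C_M, current C, rejected contexts).\<close>
definition rw_step :: "ctx set \<Rightarrow> (ctx \<Rightarrow> bool) \<Rightarrow> nat \<Rightarrow> ctx multiset \<times> ctx \<times> ctx set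
    \<Rightarrow> (ctx multiset \<times> ctx \<times> ctx set) pmf" where
  "rw_step Ctx test n st = (case st of (CM, C, Rej) \<Rightarrow>
     (let cand = {C' \<in> Ctx. connected C C' \<and> C' \<notin> Rej} in
      if size CM > n \<or> cand = {} then return_pmf st
      else bind_pmf (pmf_of_set cand) (\<lambda>Ci.
        return_pmf (if test Ci then (add_mset Ci CM, Ci, Rej) else (CM, C, insert Ci Rej)))))"

text \<open>Each non-terminal step increases size C_M (at most n times) or the rejected set
  (at most card Ctx times), so n + card Ctx + 1 iterations reach termination;
  further steps are the identity.\<close>
definition rw_walk :: "ctx set \<Rightarrow> (ctx \<Rightarrow> bool) \<Rightarrow> nat \<Rightarrow> ctx \<Rightarrow> ctx multiset pmf" where
  "rw_walk Ctx test n CV = map_pmf fst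
     (((\<lambda>p. bind_pmf p (rw_step Ctx test n)) ^^ (n + card Ctx + 1)) (return_pmf ({#CV#}, CV, {})))"

definition util_ext :: "nat \<Rightarrow> ('r \<Rightarrow> nat \<Rightarrow> nat) \<Rightarrow> 'r \<Rightarrow> ('r multiset \<Rightarrow> ctx \<Rightarrow> real)
    \<Rightarrow> 'r multiset \<Rightarrow> ctx \<Rightarrow> ereal" where
  "util_ext m val V u D C = (if matches m val V C then ereal (u D C) else -\<infinity>)"

definition rws_mech :: "nat \<Rightarrow> (nat \<Rightarrow> nat) \<Rightarrow> ('r \<Rightarrow> nat \<Rightarrow> nat) \<Rightarrow> ('r multiset \<Rightarrow> 'r \<Rightarrow> bool)
    \<Rightarrow> 'r \<Rightarrow> ('r multiset \<Rightarrow> ctx \<Rightarrow> real) \<Rightarrow> real \<Rightarrow> nat \<Rightarrow> ctx \<Rightarrow> 'r multiset \<Rightarrow> ctx pmf" where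
  "rws_mech m sz val f V u \<epsilon>1 n CV D =
     (let Ctx = ctx_space m sz;
          du = real_of_ereal (sensitivity {C \<in> Ctx. matches m val V C} u)
      in bind_pmf (rw_walk Ctx (\<lambda>C. C \<in> COE m sz val f D V) n CV)
           (\<lambda>CM. exp_mech \<epsilon>1 du (util_ext m val V u D) CM))"

definition f_neighbors :: "('r multiset \<Rightarrow> 'o set) \<Rightarrow> 'r multiset \<Rightarrow> 'r multiset \<Rightarrow> bool" where
  "f_neighbors F D1 D2 \<longleftrightarrow> neighbors D1 D2 \<and> F D1 = F D2 \<and> F D1 \<noteq> {}"

definition ocdp :: "real \<Rightarrow> ('r multiset \<Rightarrow> 'o set) \<Rightarrow> ('r multiset \<Rightarrow> 'c pmf) \<Rightarrow> bool" where
  "ocdp \<epsilon> F M \<longleftrightarrow> (\<forall>D1 D2 S. f_neighbors F D1 D2 \<longrightarrow>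
      measure_pmf.prob (M D1) S \<le> exp \<epsilon> * measure_pmf.prob (M D2) S)"

end

theory Submission
  imports Defs
begin

(* The walk consults the data only through membership in COE(D, V), which f-neighbouring
   datasets share, so both datasets induce the same distribution of multisets C_M; every context
   in C_M matches V, so its utility is finite and moves by at most the sensitivity. Each weight
   of the exponential mechanism therefore changes by a factor at most exp(eps1/2), and so does
   the normaliser, giving a pointwise ratio exp(eps1) of output probabilities. Mixing over the
   walk and summing over an output set preserve this ratio: the mechanism is even
   eps1-output-constrained private, and 2 eps1 is slack. *)

lemma measure_pmf_prob_le_pointwise:
  assumes "\<And>x. pmf p x \<le> c * pmf q x"
  shows "measure_pmf.prob p S \<le> c * measure_pmf.prob q S"
proof -
  have "measure_pmf.prob p S = (\<integral>x. pmf p x \<partial>count_space S)"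
    by (simp add: integral_pmf)
  also have "\<dots> \<le> (\<integral>x. c * pmf q x \<partial>count_space S)"
    using assms by (intro integral_mono integrable_pmf integrable_mult_right) auto
  also have "\<dots> = c * measure_pmf.prob q S"
    by (simp add: integral_pmf)
  finally show ?thesis .
qed

lemma pmf_bind_pmf_le_pointwise:
  assumes "\<And>x. x \<in> set_pmf N \<Longrightarrow> pmf (f x) y \<le> c * pmf (g x) y"
  shows "pmf (bind_pmf N f) y \<le> c * pmf (bind_pmf N g) y"
proof -
  have "pmf (bind_pmf N f) y \<le> (\<integral>x. c * pmf (g x) y \<partial>measure_pmf N)"
    unfolding pmf_bind using assms
    by (intro integral_mono_AE measure_pmf.integrable_const_bound[where B = 1] integrable_mult_right)
       (auto simp: AE_measure_pmf_iff pmf_le_1)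
  then show ?thesis
    by (simp add: pmf_bind)
qed

lemma sum_mset_image_mset_eq_sum_count:
  fixes g :: "'a \<Rightarrow> 'b::comm_semiring_1"
  assumes "finite A" "set_mset M \<subseteq> A"
  shows "(\<Sum>x\<in>#M. g x) = (\<Sum>x\<in>A. of_nat (count M x) * g x)"
  using assms(2)
proof (induction M)
  case empty
  then show ?case by simp
next
  case (add a M)
  have "(\<Sum>x\<in>A. of_nat (count (add_mset a M) x) * g x)
      = (\<Sum>x\<in>A. of_nat (count M x) * g x + (if x = a then g x else 0))"
    by (intro sum.cong) (auto simp: algebra_simps)
  also have "\<dots> = (\<Sum>x\<in>A. of_nat (count M x) * g x) + g a"
    using add.prems assms(1) by (simp add: sum.distrib sum.delta)
  finally show ?case
    using add by (simp add: add.commute)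
qed

lemma exp_weight_pos: "\<bar>x\<bar> \<noteq> \<infinity> \<Longrightarrow> 0 < exp_weight \<epsilon> du x"
  by (cases x) (auto simp: exp_weight_def)

lemma exp_weight_nonneg: "0 \<le> exp_weight \<epsilon> du x"
  by (cases x) (auto simp: exp_weight_def)

lemma exp_weight_ereal_le:
  assumes "0 \<le> \<epsilon>" and "\<bar>x - y\<bar> \<le> du"
  shows "exp_weight \<epsilon> du (ereal x) \<le> exp (\<epsilon> / 2) * exp_weight \<epsilon> du (ereal y)"
proof -
  have "\<epsilon> * x / (2 * du) \<le> \<epsilon> / 2 + \<epsilon> * y / (2 * du)"
  proof (cases "du = 0")
    case True
    then show ?thesis using assms by simp
  next
    case False
    then have "0 < du" using assms(2) by linarith
    moreover have "\<epsilon> * (x - y) \<le> \<epsilon> * du"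
      using assms by (intro mult_left_mono) auto
    ultimately show ?thesis by (simp add: field_simps)
  qed
  then show ?thesis
    by (simp add: exp_weight_def exp_add[symmetric])
qed

lemma sum_mset_exp_weight_pos:
  assumes "M \<noteq> {#}" and "\<And>r. r \<in># M \<Longrightarrow> \<bar>s r\<bar> \<noteq> \<infinity>"
  shows "0 < (\<Sum>r\<in>#M. exp_weight \<epsilon> du (s r))"
proof -
  obtain a where "a \<in># M"
    using assms(1) by blast
  then have "0 < (\<Sum>r\<in>set_mset M. of_nat (count M r) * exp_weight \<epsilon> du (s r))"
    using assms(2) by (intro sum_pos2[of _ a]) (auto simp: exp_weight_pos exp_weight_nonneg)
  then show ?thesis
    by (subst sum_mset_image_mset_eq_sum_count) auto
qed

lemma pmf_exp_mech:
  assumes "M \<noteq> {#}" and "\<And>r. r \<in># M \<Longrightarrow> \<bar>s r\<bar> \<noteq> \<infinity>"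
  shows "pmf (exp_mech \<epsilon> du s M) r
    = of_nat (count M r) * exp_weight \<epsilon> du (s r) / (\<Sum>r'\<in>#M. exp_weight \<epsilon> du (s r'))"
proof -
  define w where "w r = exp_weight \<epsilon> du (s r)" for r
  define Z where "Z = (\<Sum>r\<in>#M. w r)"
  have "0 < Z"
    unfolding Z_def w_def using assms by (rule sum_mset_exp_weight_pos)
  have nonneg: "0 \<le> of_nat (count M r) * w r / Z" for r
    using \<open>0 < Z\<close> by (simp add: w_def exp_weight_nonneg)
  have "(\<integral>\<^sup>+r. ennreal (of_nat (count M r) * w r / Z) \<partial>count_space UNIV)
      = ennreal (\<Sum>r\<in>set_mset M. of_nat (count M r) * w r / Z)"
    using nonneg by (subst nn_integral_count_space') (auto simp: not_in_iff sum_ennreal)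
  also have "(\<Sum>r\<in>set_mset M. of_nat (count M r) * w r / Z) = 1"
    using \<open>0 < Z\<close> unfolding Z_def
    by (simp add: sum_divide_distrib[symmetric] sum_mset_image_mset_eq_sum_count[of "set_mset M"])
  finally show ?thesis
    using pmf_embed_pmf[OF nonneg] unfolding exp_mech_def w_def Z_def by simp
qed

lemma pmf_exp_mech_le:
  assumes "M \<noteq> {#}"
    and "\<And>r. r \<in># M \<Longrightarrow> \<bar>s1 r\<bar> \<noteq> \<infinity>" "\<And>r. r \<in># M \<Longrightarrow> \<bar>s2 r\<bar> \<noteq> \<infinity>"
    and "\<And>r. r \<in># M \<Longrightarrow> exp_weight \<epsilon> du (s1 r) \<le> k * exp_weight \<epsilon> du (s2 r)"
    and "\<And>r. r \<in># M \<Longrightarrow> exp_weight \<epsilon> du (s2 r) \<le> k * exp_weight \<epsilon> du (s1 r)"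
  shows "pmf (exp_mech \<epsilon> du s1 M) r \<le> k\<^sup>2 * pmf (exp_mech \<epsilon> du s2 M) r"
proof -
  define w1 where "w1 r = exp_weight \<epsilon> du (s1 r)" for r
  define w2 where "w2 r = exp_weight \<epsilon> du (s2 r)" for r
  define Z1 where "Z1 = (\<Sum>r\<in>#M. w1 r)"
  define Z2 where "Z2 = (\<Sum>r\<in>#M. w2 r)"
  have "0 < Z1" "0 < Z2"
    unfolding Z1_def Z2_def w1_def w2_def
    using sum_mset_exp_weight_pos[OF assms(1,2)] sum_mset_exp_weight_pos[OF assms(1,3)] by auto
  obtain a where a: "a \<in># M"
    using assms(1) by blast
  have "0 < k * w1 a"
    using exp_weight_pos[OF assms(3)[OF a], of \<epsilon> du] assms(5)[OF a] unfolding w1_def by linarith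
  moreover have "0 < w1 a"
    using a assms(2) by (simp add: w1_def exp_weight_pos)
  ultimately have "0 \<le> k"
    by (simp add: zero_less_mult_iff)
  have "Z2 \<le> (\<Sum>r\<in>#M. k * w1 r)"
    unfolding Z2_def using assms(5) by (intro sum_mset_mono) (simp add: w1_def w2_def)
  also have "\<dots> = k * Z1"
    by (simp add: Z1_def sum_mset_distrib_left)
  finally have Z_le: "Z2 \<le> k * Z1" .
  have count_le: "of_nat (count M r) * w1 r \<le> of_nat (count M r) * (k * w2 r)"
    using assms(4) by (cases "r \<in># M") (auto simp: w1_def w2_def not_in_iff intro: mult_left_mono)
  have "of_nat (count M r) * w1 r * Z2 \<le> of_nat (count M r) * (k * w2 r) * (k * Z1)"
    using \<open>0 \<le> k\<close> \<open>0 < Z2\<close>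
    by (intro mult_mono[OF count_le Z_le]) (auto simp: w2_def exp_weight_nonneg)
  then show ?thesis
    using \<open>0 < Z1\<close> \<open>0 < Z2\<close> assms(1-3)
    by (simp add: pmf_exp_mech w1_def w2_def Z1_def Z2_def field_simps power2_eq_square)
qed

lemma abs_diff_le_sensitivity:
  assumes "neighbors D1 D2" and "C \<in> R" and "sensitivity R u \<noteq> \<infinity>"
  shows "\<bar>u D1 C - u D2 C\<bar> \<le> real_of_ereal (sensitivity R u)"
proof -
  have "ereal \<bar>u D1 C - u D2 C\<bar> \<le> sensitivity R u"
    unfolding sensitivity_def by (rule SUP_upper2[of "(D1, D2, C)"]) (use assms in auto)
  then show ?thesis
    using assms(3) by (cases "sensitivity R u") auto
qed

lemma neighbors_sym: "neighbors D1 D2 \<Longrightarrow> neighbors D2 D1"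
  by (auto simp: neighbors_def)

lemma finite_ctx_space: "finite (ctx_space m sz)"
proof -
  have "{(i, j). i < m \<and> j < sz i} = (SIGMA i:{..<m}. {..<sz i})"
    by auto
  then show ?thesis
    unfolding ctx_space_def by simp
qed

lemma COE_subset_matches: "COE m sz val f D V \<subseteq> {C \<in> ctx_space m sz. matches m val V C}"
  by (auto simp: COE_def restrict_ds_def matches_def)

lemma set_pmf_funpow_bind_pmf_invariant:
  assumes "\<And>x. x \<in> set_pmf p \<Longrightarrow> P x"
    and "\<And>x y. P x \<Longrightarrow> y \<in> set_pmf (step x) \<Longrightarrow> P y"
    and "y \<in> set_pmf (((\<lambda>q. bind_pmf q step) ^^ k) p)"
  shows "P y"
  using assms(3)
proof (induction k arbitrary: y)
  case 0
  then show ?case using assms(1) by simp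
next
  case (Suc k)
  then show ?case using assms(2) by auto
qed

lemma set_pmf_rw_step:
  assumes "finite Ctx" and "st' \<in> set_pmf (rw_step Ctx test n st)"
  shows "fst st' = fst st \<or> (\<exists>C\<in>Ctx. test C \<and> fst st' = add_mset C (fst st))"
proof -
  obtain CM C Rej where "st = (CM, C, Rej)"
    by (cases st) auto
  then show ?thesis
    using assms unfolding rw_step_def Let_def by (auto split: if_splits)
qed

lemma set_pmf_rw_walk:
  assumes "finite Ctx" and "CM \<in> set_pmf (rw_walk Ctx test n CV)"
  shows "CM \<noteq> {#} \<and> set_mset CM \<subseteq> insert CV {C \<in> Ctx. test C}"
proof -
  obtain st where st: "st \<in> set_pmf (((\<lambda>p. bind_pmf p (rw_step Ctx test n)) ^^ (n + card Ctx + 1))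
      (return_pmf ({#CV#}, CV, {})))" and "CM = fst st"
    using assms(2) unfolding rw_walk_def by auto
  have "fst st \<noteq> {#} \<and> set_mset (fst st) \<subseteq> insert CV {C \<in> Ctx. test C}"
    by (rule set_pmf_funpow_bind_pmf_invariant[OF _ _ st])
       (use set_pmf_rw_step[OF assms(1)] in fastforce)+
  then show ?thesis
    using \<open>CM = fst st\<close> by simp
qed

lemma pmf_rws_mech_le:
  assumes "0 \<le> \<epsilon>1"
    and sens: "sensitivity {C \<in> ctx_space m sz. matches m val V C} u \<noteq> \<infinity>"
    and "CV \<in> ctx_space m sz" and "matches m val V CV"
    and "neighbors D1 D2" and COE_eq: "COE m sz val f D1 V = COE m sz val f D2 V"
  shows "pmf (rws_mech m sz val f V u \<epsilon>1 n CV D1) C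
    \<le> exp \<epsilon>1 * pmf (rws_mech m sz val f V u \<epsilon>1 n CV D2) C"
proof -
  define R where "R = {C \<in> ctx_space m sz. matches m val V C}"
  define du where "du = real_of_ereal (sensitivity R u)"
  define W where "W = rw_walk (ctx_space m sz) (\<lambda>C. C \<in> COE m sz val f D1 V) n CV"
  define s where "s D = util_ext m val V u D" for D
  have mech: "rws_mech m sz val f V u \<epsilon>1 n CV D = bind_pmf W (exp_mech \<epsilon>1 du (s D))"
    if "D \<in> {D1, D2}" for D
    using that COE_eq unfolding rws_mech_def W_def du_def R_def s_def Let_def by auto
  have weight_le: "exp_weight \<epsilon>1 du (s Da C) \<le> exp (\<epsilon>1 / 2) * exp_weight \<epsilon>1 du (s Db C)"
    if "neighbors Da Db" and "C \<in> R" for Da Db C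
    using that exp_weight_ereal_le[OF assms(1) abs_diff_le_sensitivity[OF that sens[folded R_def]]]
    by (simp add: s_def util_ext_def R_def du_def)
  have "pmf (exp_mech \<epsilon>1 du (s D1) CM) C \<le> (exp (\<epsilon>1 / 2))\<^sup>2 * pmf (exp_mech \<epsilon>1 du (s D2) CM) C"
    if "CM \<in> set_pmf W" for CM
  proof -
    have "CM \<noteq> {#}" and "set_mset CM \<subseteq> R"
      using set_pmf_rw_walk[OF finite_ctx_space that[unfolded W_def]] assms(3,4)
        COE_subset_matches[of m sz val f D1 V]
      by (auto simp: R_def)
    then show ?thesis
      using weight_le[OF \<open>neighbors D1 D2\<close>] weight_le[OF neighbors_sym[OF \<open>neighbors D1 D2\<close>]]
      by (intro pmf_exp_mech_le) (auto simp: s_def util_ext_def R_def)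
  qed
  then show ?thesis
    unfolding mech[of D1, simplified] mech[of D2, simplified]
    by (intro pmf_bind_pmf_le_pointwise) (simp add: exp_double[symmetric])
qed

lemma ocdp_mono: "ocdp \<epsilon> F M \<Longrightarrow> \<epsilon> \<le> \<epsilon>' \<Longrightarrow> ocdp \<epsilon>' F M"
  unfolding ocdp_def by (meson order_trans mult_right_mono exp_le_cancel_iff measure_nonneg)

lemma ocdp_rws_mech:
  assumes "0 \<le> \<epsilon>1"
    and "sensitivity {C \<in> ctx_space m sz. matches m val V C} u \<noteq> \<infinity>"
    and "CV \<in> ctx_space m sz" and "matches m val V CV"
  shows "ocdp \<epsilon>1 (\<lambda>D. COE m sz val f D V) (rws_mech m sz val f V u \<epsilon>1 n CV)"
  unfolding ocdp_def f_neighbors_def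
  using pmf_rws_mech_le[OF assms] by (blast intro: measure_pmf_prob_le_pointwise)

theorem theorem6:
  fixes m :: nat and sz :: "nat \<Rightarrow> nat" and val :: "'r \<Rightarrow> nat \<Rightarrow> nat"
    and f :: "'r multiset \<Rightarrow> 'r \<Rightarrow> bool" and V :: 'r
    and u :: "'r multiset \<Rightarrow> ctx \<Rightarrow> real" and \<epsilon>1 :: real and n :: nat and CV :: ctx
  assumes "\<epsilon>1 > 0"
    and "sensitivity {C \<in> ctx_space m sz. matches m val V C} u \<le> 1"
    and "CV \<in> ctx_space m sz"
    and "matches m val V CV"
  shows "ocdp (2 * \<epsilon>1) (\<lambda>D. COE m sz val f D V) (rws_mech m sz val f V u \<epsilon>1 n CV)"
proof -
  have "sensitivity {C \<in> ctx_space m sz. matches m val V C} u \<noteq> \<infinity>"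
    using assms(2) by auto
  then have "ocdp \<epsilon>1 (\<lambda>D. COE m sz val f D V) (rws_mech m sz val f V u \<epsilon>1 n CV)"
    using assms(1,3,4) by (intro ocdp_rws_mech) auto
  then show ?thesis
    by (rule ocdp_mono) (use assms(1) in simp)
qed

end
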